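(* Let $ABC$ be a triangle with $\angle A\neq 90^\circ$. Then the points $S_A$ and $M_A$ are isogonal conjugates with respect to triangle $ABC$.
   Context: $O$ is the circumcenter of $ABC$. The symmedian from $A$ is the reflection of the median $AE$ ($E$ the midpoint of $BC$) in the bisector of angle $A$. $S_A$ is the unique point with $\angle BS_AC=2\angle A$ and $\angle CS_AA=\angle AS_AB=180^\circ-\angle A$ (directed angles); it is the point where the ray from $A$ along the symmedian from $A$ meets the arc $BC$ of the circle through $B$, $C$, $O$ that contains $O$. The point $M_A$: if $\angle A<90^\circ$, let $F$ be the second intersection of the median line $AE$ with the circumcircle of $ABC$, and $M_A$ the point on segment $AE$ with $EM_A=EF$; if $\angle A>90^\circ$, let $F$ be the point with $ABFC$ a parallelogram, and $M_A$ the second intersection of line $AE$ with the circumcircle of $FBC$. Points $P$ and $Q$ are isogonal conjugates with respect to $ABC$ if $\angle CBQ=\angle PBA$, $\angle BAP=\angle QAC$ and $\angle ACQ=\angle PCB$. *)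

theory Defs
  imports "HOL-Analysis.Analysis"
begin

definition angle_at :: "complex \<Rightarrow> complex \<Rightarrow> complex \<Rightarrow> real" where
  "angle_at X Y Z = arccos (((X - Y) \<bullet> (Z - Y)) / (norm (X - Y) * norm (Z - Y)))"

definition dir_angle :: "complex \<Rightarrow> complex \<Rightarrow> complex \<Rightarrow> real" where
  "dir_angle X Y Z = Arg ((Z - Y) / (X - Y))"

definition dangle_eq :: "real \<Rightarrow> real \<Rightarrow> bool" where
  "dangle_eq a b \<longleftrightarrow> (\<exists>k::int. a - b = of_int k * pi)"

definition circumcenter_pt :: "complex \<Rightarrow> complex \<Rightarrow> complex \<Rightarrow> complex \<Rightarrow> bool" where
  "circumcenter_pt A B C Oc \<longleftrightarrow> dist Oc A = dist Oc B \<and> dist Oc B = dist Oc C"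

definition on_circle3 :: "complex \<Rightarrow> complex \<Rightarrow> complex \<Rightarrow> complex \<Rightarrow> bool" where
  "on_circle3 X Y Z P \<longleftrightarrow>
     (\<exists>c. dist c X = dist c Y \<and> dist c Y = dist c Z \<and> dist c P = dist c X)"

definition on_line :: "complex \<Rightarrow> complex \<Rightarrow> complex \<Rightarrow> bool" where
  "on_line X Y P \<longleftrightarrow> (\<exists>t::real. P = X + of_real t * (Y - X))"

definition same_side :: "complex \<Rightarrow> complex \<Rightarrow> complex \<Rightarrow> complex \<Rightarrow> bool" where
  "same_side X Y P Q \<longleftrightarrow> Im ((P - X) / (Y - X)) * Im ((Q - X) / (Y - X)) > 0"

text \<open>Reflection of vector v in the line through 0 with direction u.\<close>
definition refl_dir :: "complex \<Rightarrow> complex \<Rightarrow> complex" where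
  "refl_dir u v = (u / cnj u) * cnj v"

text \<open>Direction of the symmedian ray from A: reflection of the median vector E - A
  in the internal bisector of angle A.\<close>
definition symmedian_dir :: "complex \<Rightarrow> complex \<Rightarrow> complex \<Rightarrow> complex" where
  "symmedian_dir A B C =
     refl_dir ((B - A) / of_real (norm (B - A)) + (C - A) / of_real (norm (C - A)))
              ((B + C) / 2 - A)"

definition is_S_A :: "complex \<Rightarrow> complex \<Rightarrow> complex \<Rightarrow> complex \<Rightarrow> bool" where
  "is_S_A A B C S \<longleftrightarrow>
     (\<exists>Oc. circumcenter_pt A B C Oc \<and>
        (\<exists>t::real. t > 0 \<and> S = A + of_real t * symmedian_dir A B C) \<and>
        on_circle3 B C Oc S \<and> same_side B C S Oc)"

definition is_M_A :: "complex \<Rightarrow> complex \<Rightarrow> complex \<Rightarrow> complex \<Rightarrow> bool" where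
  "is_M_A A B C M \<longleftrightarrow>
     (let E = (B + C) / 2 in
      (angle_at B A C < pi / 2 \<longrightarrow>
         (\<exists>F. F \<noteq> A \<and> on_line A E F \<and> on_circle3 A B C F \<and>
              M \<in> closed_segment A E \<and> dist E M = dist E F)) \<and>
      (angle_at B A C > pi / 2 \<longrightarrow>
         (let F = B + C - A in
          M \<noteq> F \<and> on_line A E M \<and> on_circle3 F B C M)))"

definition isogonal_conj :: "complex \<Rightarrow> complex \<Rightarrow> complex \<Rightarrow> complex \<Rightarrow> complex \<Rightarrow> bool" where
  "isogonal_conj A B C P Q \<longleftrightarrow>
     dangle_eq (dir_angle C B Q) (dir_angle P B A) \<and>
     dangle_eq (dir_angle B A P) (dir_angle Q A C) \<and>
     dangle_eq (dir_angle A C Q) (dir_angle P C B)"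

end

theory Submission
  imports Defs
begin

text \<open>Put A at the origin and write b = B - A, c = C - A. The symmedian direction is a real
  multiple of b c (conj b + conj c); of the two points where this line meets the circle BCO, the
  one on the side of O is S_A = b c / (b + c), i.e. 1/S_A = 1/b + 1/c. In both cases of its
  definition M_A is the inverse of A in the circle with diameter BC (power of the midpoint of BC),
  so M_A = 2 (b . c) / conj (b + c). For these closed forms each of the three angle conditions
  reduces to the reality of a ratio, namely |b|^2 / |b + c|^2 at B, 2 (b . c) / |b + c|^2 at A
  and |c|^2 / |b + c|^2 at C.\<close>

definition cross :: "complex \<Rightarrow> complex \<Rightarrow> real" where
  "cross u v = Im (cnj u * v)"

lemma cross_neq_0_if_not_collinear:
  assumes "\<not> collinear {A, B, C}"
  shows "cross (B - A) (C - A) \<noteq> 0"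
proof
  assume "cross (B - A) (C - A) = 0"
  then have "(C - A) / (B - A) \<in> \<real>"
    by (simp add: cross_def complex_is_Real_iff Im_divide algebra_simps)
  then have "collinear {0, B - A, C - A}"
    by (simp only: collinear_iff_Reals)
  then have "collinear {B, A, C}"
    by (subst collinear_3) simp
  with assms show False
    by (simp add: insert_commute)
qed

lemma cross_neq_0_imp_distinct:
  assumes "cross b c \<noteq> 0"
  shows "b \<noteq> 0" "c \<noteq> 0" "b \<noteq> c" "b + c \<noteq> 0"
proof -
  have "cross b (- b) = 0"
    by (simp add: cross_def)
  then show "b \<noteq> 0" "c \<noteq> 0" "b \<noteq> c" "b + c \<noteq> 0"
    using assms by (auto simp: cross_def add_eq_0_iff2)
qed

lemma dangle_eq_Arg_if_div_Reals:
  assumes "u \<noteq> 0" "v \<noteq> 0" and "u / v \<in> \<real>"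
  shows "dangle_eq (Arg u) (Arg v)"
proof -
  obtain r where "u / v = of_real r"
    using assms(3) by (auto elim: Reals_cases)
  then have "u * cnj v = of_real r * (v * cnj v)"
    using assms(2) by (simp add: field_simps)
  then have "Im (u * cnj v) = 0"
    by (simp add: complex_mult_cnj del: of_real_add of_real_power)
  then have "cmod u * cmod v * sin (Arg u - Arg v) = 0"
    using assms(1,2) by (simp add: sin_diff sin_Arg cos_Arg field_simps)
  then have "sin (Arg u - Arg v) = 0"
    using assms(1,2) by simp
  then show ?thesis
    unfolding dangle_eq_def by (auto simp: sin_zero_iff_int2)
qed

lemma dist_eq_iff_coords:
  "dist P U = dist P V \<longleftrightarrow>
     (Re P - Re U)^2 + (Im P - Im U)^2 = (Re P - Re V)^2 + (Im P - Im V)^2"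
  by (simp add: dist_norm cmod_def)

lemma of_real_inner_complex: "of_real (2 * (b \<bullet> c)) = cnj b * c + b * cnj c"
  by (simp add: complex_eq_iff inner_complex_def)

lemma cnj_mult_self_Reals: "cnj z * z \<in> \<real>"
  by (simp add: mult.commute flip: complex_norm_square)

lemma isogonal_conjI:
  assumes "P \<notin> {A, B, C}" "Q \<notin> {A, B, C}" "A \<noteq> B" "B \<noteq> C" "C \<noteq> A"
    and "(Q - B) / (C - B) / ((A - B) / (P - B)) \<in> \<real>"
    and "(P - A) / (B - A) / ((C - A) / (Q - A)) \<in> \<real>"
    and "(Q - C) / (A - C) / ((B - C) / (P - C)) \<in> \<real>"
  shows "isogonal_conj A B C P Q"
  unfolding isogonal_conj_def dir_angle_def
  using assms by (intro conjI dangle_eq_Arg_if_div_Reals) auto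

lemma isogonal_conj_translate:
  "isogonal_conj (A + a) (A + b) (A + c) (A + p) (A + q) \<longleftrightarrow> isogonal_conj a b c p q"
  by (simp add: isogonal_conj_def dir_angle_def)

lemma isogonal_conj_closed_form:
  fixes A b c :: complex
  assumes "cross b c \<noteq> 0" and "b \<bullet> c \<noteq> 0"
  shows "isogonal_conj A (A + b) (A + c) (A + b * c / (b + c)) (A + 2 * (b \<bullet> c) / cnj (b + c))"
proof -
  define s where "s = b * c / (b + c)"
  define m where "m = 2 * (b \<bullet> c) / cnj (b + c)"
  note nz = cross_neq_0_imp_distinct[OF assms(1)]
  have cnz: "cnj (b + c) \<noteq> 0"
    using nz(4) by (metis complex_cnj_zero_iff)
  have "m - b = cnj b * (c - b) / cnj (b + c)" and "m - c = cnj c * (b - c) / cnj (b + c)"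
    using cnz unfolding m_def of_real_inner_complex by (simp_all add: field_simps)
  then have mb: "(m - b) / (c - b) = cnj (b / (b + c))"
    and mc: "(m - c) / (b - c) = cnj (c / (b + c))"
    using nz(3) by simp_all
  have s_b: "s - b = - (b * b) / (b + c)" and s_c: "s - c = - (c * c) / (b + c)"
    using nz unfolding s_def by (simp_all add: field_simps)
  have sb: "(0 - b) / (s - b) = (b + c) / b" and sc: "(0 - c) / (s - c) = (b + c) / c"
    unfolding s_b s_c using nz by (simp_all add: field_simps)
  have "(m - b) / (c - b) / ((0 - b) / (s - b)) = cnj (b / (b + c)) * (b / (b + c))"
    unfolding mb sb by simp
  then have at_B: "(m - b) / (c - b) / ((0 - b) / (s - b)) \<in> \<real>"
    by (simp only: cnj_mult_self_Reals)
  have "(s - 0) / (b - 0) = c / (b + c)"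
    unfolding s_def using nz by simp
  then have "(s - 0) / (b - 0) / ((c - 0) / (m - 0)) = m / (b + c)"
    using nz by (simp add: field_simps)
  also have "\<dots> = of_real (2 * (b \<bullet> c)) / (cnj (b + c) * (b + c))"
    unfolding m_def by (simp only: divide_divide_eq_left)
  finally have at_A: "(s - 0) / (b - 0) / ((c - 0) / (m - 0)) \<in> \<real>"
    by (metis Reals_divide Reals_of_real cnj_mult_self_Reals)
  have "(m - c) / (0 - c) / ((b - c) / (s - c)) = (m - c) / (b - c) / ((0 - c) / (s - c))"
    by (metis divide_divide_times_eq mult.commute)
  also have "\<dots> = cnj (c / (b + c)) * (c / (b + c))"
    unfolding mc sc by simp
  finally have at_C: "(m - c) / (0 - c) / ((b - c) / (s - c)) \<in> \<real>"
    by (simp only: cnj_mult_self_Reals)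
  have "s \<notin> {0, b, c}"
    using nz s_b s_c by (auto simp: s_def)
  moreover have "m \<notin> {0, b, c}"
    using nz assms(2) cnz mb mc by (auto simp: m_def)
  ultimately have "isogonal_conj 0 b c s m"
    using nz at_A at_B at_C by (intro isogonal_conjI) auto
  then show ?thesis
    unfolding s_def m_def by (simp flip: isogonal_conj_translate[of A 0])
qed

text \<open>Eliminating the centres p and q leaves a quadratic in t whose roots are the two points
  where the symmedian line meets the circle through b, c, p: t = 1 / |b + c|^2 gives S_A, and
  t = 1 / (2 (b . c)) a point on the other side of bc.\<close>

lemma symmedian_circle_intersections:
  fixes b c p q :: complex and t :: real
  assumes "dist p 0 = dist p b" "dist p 0 = dist p c"
    and "dist q b = dist q c" "dist q c = dist q p" "dist q (t * (b * c * cnj (b + c))) = dist q b"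
  shows "cross b c * (cmod (b - c))^2 * (cmod b)^2 * (cmod c)^2
           * (t * (cmod (b + c))^2 - 1) * (2 * (b \<bullet> c) * t - 1) = 0"
proof -
  define b1 b2 c1 c2 where bc: "b1 = Re b" "b2 = Im b" "c1 = Re c" "c2 = Im c"
  define p1 p2 q1 q2 where pq: "p1 = Re p" "p2 = Im p" "q1 = Re q" "q2 = Im q"
  define w1 w2 where w12: "w1 = (c1^2 + c2^2) * b1 + (b1^2 + b2^2) * c1"
    "w2 = (c1^2 + c2^2) * b2 + (b1^2 + b2^2) * c2"
  have w: "Re (t * (b * c * cnj (b + c))) = t * w1" "Im (t * (b * c * cnj (b + c))) = t * w2"
    unfolding w12 bc by (simp_all add: algebra_simps power2_eq_square)
  have p: "2 * (p1 * b1 + p2 * b2) = b1^2 + b2^2" "2 * (p1 * c1 + p2 * c2) = c1^2 + c2^2"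
    using assms(1,2) unfolding dist_eq_iff_coords pq bc
    by (simp_all add: power2_eq_square algebra_simps)
  have q: "(q1 - b1)^2 + (q2 - b2)^2 = (q1 - c1)^2 + (q2 - c2)^2"
    "(q1 - c1)^2 + (q2 - c2)^2 = (q1 - p1)^2 + (q2 - p2)^2"
    "(q1 - t * w1)^2 + (q2 - t * w2)^2 = (q1 - b1)^2 + (q2 - b2)^2"
    using assms(3-5) unfolding dist_eq_iff_coords w
    by (simp_all add: bc pq)
  have "cross b c * (cmod (b - c))^2 * (cmod b)^2 * (cmod c)^2
           * (t * (cmod (b + c))^2 - 1) * (2 * (b \<bullet> c) * t - 1)
      = (b1 * c2 - b2 * c1) * ((b1 - c1)^2 + (b2 - c2)^2) * (b1^2 + b2^2) * (c1^2 + c2^2)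
           * (t * ((b1 + c1)^2 + (b2 + c2)^2) - 1) * (2 * (b1 * c1 + b2 * c2) * t - 1)"
    by (simp add: bc cross_def cmod_power2 inner_complex_def)
  also have "\<dots> = 0"
    using p q unfolding w12 by algebra
  finally show ?thesis .
qed

lemma same_side_iff_cross:
  "same_side X Y P Q \<longleftrightarrow> cross (Y - X) (P - X) * cross (Y - X) (Q - X) > 0"
proof -
  have Im: "Im (Z / (Y - X)) = cross (Y - X) Z / (cmod (Y - X))^2" for Z
    by (simp add: Im_divide cross_def cmod_power2 algebra_simps)
  show ?thesis
    unfolding same_side_def Im[of "P - X"] Im[of "Q - X"]
    by (cases "Y = X") (auto simp: cross_def zero_less_divide_iff zero_less_mult_iff)
qed

lemma symmedian_second_intersection_opposite_side:
  fixes b c p :: complex and t :: real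
  assumes "cross b c \<noteq> 0" and "dist p 0 = dist p b" "dist p 0 = dist p c"
    and "2 * (b \<bullet> c) * t = 1"
  shows "\<not> same_side b c (t * (b * c * cnj (b + c))) p"
proof -
  define b1 b2 c1 c2 where bc: "b1 = Re b" "b2 = Im b" "c1 = Re c" "c2 = Im c"
  define p1 p2 where pp: "p1 = Re p" "p2 = Im p"
  have p: "2 * (p1 * b1 + p2 * b2) = b1^2 + b2^2" "2 * (p1 * c1 + p2 * c2) = c1^2 + c2^2"
    using assms(2,3) unfolding dist_eq_iff_coords pp bc
    by (simp_all add: power2_eq_square algebra_simps)
  have "4 * (cross (c - b) (t * (b * c * cnj (b + c)) - b) * cross (c - b) (p - b))
      = 4 * ((c1 - b1) * (t * ((c1^2 + c2^2) * b2 + (b1^2 + b2^2) * c2) - b2)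
             - (c2 - b2) * (t * ((c1^2 + c2^2) * b1 + (b1^2 + b2^2) * c1) - b1))
           * ((c1 - b1) * (p2 - b2) - (c2 - b2) * (p1 - b1))"
    by (simp add: bc pp cross_def algebra_simps power2_eq_square)
  also have "\<dots> = - (((b1 - c1)^2 + (b2 - c2)^2)^2)"
    using p assms(1,4) unfolding bc[symmetric] cross_def inner_complex_def by algebra
  finally show ?thesis
    unfolding same_side_iff_cross by (smt (verit) zero_le_power2)
qed

lemma refl_dir_scale:
  assumes "r \<noteq> 0"
  shows "refl_dir (of_real r * u) z = refl_dir u z"
  using assms by (simp add: refl_dir_def)

lemma symmedian_dir_parallel:
  assumes "B \<noteq> A" "C \<noteq> A"
  obtains k :: real
  where "symmedian_dir A B C = k * ((B - A) * (C - A) * cnj ((B - A) + (C - A)))"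
proof -
  define b c where bc: "b = B - A" "c = C - A"
  define v where "v = of_real (cmod c) * b + of_real (cmod b) * c"
  define \<rho> where "\<rho> = 2 * (b \<bullet> c) + 2 * cmod b * cmod c"
  have nz: "cmod b \<noteq> 0" "cmod c \<noteq> 0"
    using assms by (simp_all add: bc)
  have "(B - A) / of_real (cmod (B - A)) + (C - A) / of_real (cmod (C - A))
      = of_real (1 / (cmod b * cmod c)) * v"
    using nz by (simp add: bc v_def field_simps)
  then have dir: "symmedian_dir A B C = v / cnj v * cnj ((b + c) / 2)"
    using nz by (simp add: symmedian_dir_def refl_dir_scale bc diff_divide_distrib add_divide_distrib)
      (simp add: refl_dir_def)
  have "v * v = of_real \<rho> * (b * c)"
  proof -
    have "of_real (cmod b) * of_real (cmod b) = b * cnj b"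
      "of_real (cmod c) * of_real (cmod c) = c * cnj c"
      by (metis complex_norm_square of_real_mult power2_eq_square)+
    moreover have "2 * of_real (b \<bullet> c) = cnj b * c + b * cnj c"
      using of_real_inner_complex[of b c] by simp
    ultimately show ?thesis
      unfolding v_def \<rho>_def of_real_add of_real_mult of_real_numeral by algebra
  qed
  have "symmedian_dir A B C = of_real (\<rho> / (2 * (cmod v)^2)) * (b * c * cnj (b + c))"
  proof (cases "v = 0")
    case False
    then have vv: "v / cnj v = of_real \<rho> * (b * c) / of_real ((cmod v)^2)"
      unfolding complex_norm_square \<open>v * v = of_real \<rho> * (b * c)\<close>[symmetric] by simp
    show ?thesis
      unfolding dir vv using False by (simp add: field_simps)
  qed (simp add: dir)
  then show ?thesis
    using that bc by blast
qed

lemma is_S_A_eq: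
  assumes "\<not> collinear {A, B, C}" and "is_S_A A B C S"
  shows "S = A + (B - A) * (C - A) / ((B - A) + (C - A))"
proof -
  define b c where bc: "b = B - A" "c = C - A"
  have X: "cross b c \<noteq> 0"
    using cross_neq_0_if_not_collinear[OF assms(1)] by (simp add: bc)
  note nz = cross_neq_0_imp_distinct[OF X]
  from assms(2) obtain Oc t where circ: "circumcenter_pt A B C Oc"
    and S: "S = A + of_real t * symmedian_dir A B C"
    and "on_circle3 B C Oc S" and side: "same_side B C S Oc"
    unfolding is_S_A_def by blast
  then obtain q where q: "dist q B = dist q C" "dist q C = dist q Oc" "dist q S = dist q B"
    unfolding on_circle3_def by blast
  obtain k where k: "symmedian_dir A B C = of_real k * (b * c * cnj (b + c))"
    using symmedian_dir_parallel nz(1,2) unfolding bc by (metis eq_iff_diff_eq_0)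
  define \<tau> where "\<tau> = t * k"
  have S: "S - A = of_real \<tau> * (b * c * cnj (b + c))"
    unfolding S k \<tau>_def by simp
  have shift: "dist (x - A) (y - A) = dist x y" for x y
    by (simp add: dist_norm)
  have circ': "dist (Oc - A) 0 = dist (Oc - A) b" "dist (Oc - A) 0 = dist (Oc - A) c"
    using circ unfolding circumcenter_pt_def bc shift by (simp_all add: dist_norm)
  have "dist (q - A) b = dist (q - A) c" "dist (q - A) c = dist (q - A) (Oc - A)"
    "dist (q - A) (S - A) = dist (q - A) b"
    using q unfolding bc shift by simp_all
  from symmedian_circle_intersections[OF circ' this[unfolded S]]
  have "cross b c * (cmod (b - c))^2 * (cmod b)^2 * (cmod c)^2
           * (\<tau> * (cmod (b + c))^2 - 1) * (2 * (b \<bullet> c) * \<tau> - 1) = 0" .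
  moreover have "2 * (b \<bullet> c) * \<tau> \<noteq> 1"
  proof
    assume "2 * (b \<bullet> c) * \<tau> = 1"
    from symmedian_second_intersection_opposite_side[OF X circ' this]
    have "\<not> same_side b c (S - A) (Oc - A)"
      unfolding S .
    then show False
      using side unfolding same_side_def bc by simp
  qed
  ultimately have "\<tau> * (cmod (b + c))^2 = 1"
    using X nz by simp
  then have "of_real \<tau> * ((b + c) * cnj (b + c)) = 1"
    by (metis complex_norm_square of_real_1 of_real_mult)
  moreover have "S - A = b * c / (b + c) * (of_real \<tau> * ((b + c) * cnj (b + c)))"
    unfolding S using nz(4) by (simp add: field_simps)
  ultimately show ?thesis
    unfolding bc by (simp add: algebra_simps)
qed

lemma chord_product_through_midpoint:
  fixes B C q d :: complex and u v :: real
  assumes "d \<noteq> 0" and "dist q B = dist q C"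
    and "dist q ((B + C) / 2 + u * d) = dist q B" "dist q ((B + C) / 2 + v * d) = dist q B"
    and "u \<noteq> v"
  shows "u * v = - ((cmod (B - C))^2 / (4 * (cmod d)^2))"
proof -
  have "(u - v) * (4 * u * v * (cmod d)^2 + (cmod (B - C))^2) = 0"
    using assms(2-4) unfolding dist_eq_iff_coords cmod_power2
    by (simp add: algebra_simps power2_eq_square) algebra
  then have "4 * u * v * (cmod d)^2 = - ((cmod (B - C))^2)"
    using assms(5) by simp
  then show ?thesis
    using assms(1) by (simp add: field_simps)
qed

lemma is_M_A_eq_acute:
  fixes A B C M :: complex
  defines "E \<equiv> (B + C) / 2"
  assumes "A \<noteq> E" and "angle_at B A C < pi / 2" and "is_M_A A B C M"
  shows "M = E + of_real ((cmod (B - C))^2 / (4 * (cmod (A - E))^2)) * (A - E)"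
proof -
  define k where "k = (cmod (B - C))^2 / (4 * (cmod (A - E))^2)"
  from assms(3,4) obtain F where "F \<noteq> A" "on_line A E F" "on_circle3 A B C F"
    and "M \<in> closed_segment A E" and EM: "dist E M = dist E F"
    unfolding is_M_A_def E_def Let_def by auto
  obtain r where "F = A + of_real r * (E - A)"
    using \<open>on_line A E F\<close> unfolding on_line_def by blast
  then have F: "F = E + of_real (1 - r) * (A - E)" and "r \<noteq> 0"
    using \<open>F \<noteq> A\<close> by (auto simp: algebra_simps)
  obtain q where q: "dist q A = dist q B" "dist q B = dist q C" "dist q F = dist q A"
    using \<open>on_circle3 A B C F\<close> unfolding on_circle3_def by blast
  obtain \<mu> where "\<mu> \<le> 1" and "M = (1 - \<mu>) *\<^sub>R A + \<mu> *\<^sub>R E"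
    using \<open>M \<in> closed_segment A E\<close> unfolding closed_segment_def by auto
  then have M: "M = E + of_real (1 - \<mu>) * (A - E)"
    by (simp add: scaleR_conv_of_real algebra_simps)
  have dist_median: "dist E (E + of_real s * (A - E)) = \<bar>s\<bar> * cmod (A - E)" for s
    by (simp add: dist_norm norm_mult)
  have "1 - r = - k"
    using chord_product_through_midpoint[of "A - E" q B C 1 "1 - r"] assms(2) q \<open>r \<noteq> 0\<close>
    unfolding k_def E_def[symmetric] F by simp
  moreover have "\<bar>1 - \<mu>\<bar> = \<bar>1 - r\<bar>"
    using EM assms(2) unfolding M F dist_median by simp
  moreover have "k \<ge> 0"
    unfolding k_def by simp
  ultimately have "1 - \<mu> = k"
    using \<open>\<mu> \<le> 1\<close> by arith
  then show ?thesis
    unfolding M k_def by simp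
qed

lemma is_M_A_eq_obtuse:
  fixes A B C M :: complex
  defines "E \<equiv> (B + C) / 2"
  assumes "A \<noteq> E" and "angle_at B A C > pi / 2" and "is_M_A A B C M"
  shows "M = E + of_real ((cmod (B - C))^2 / (4 * (cmod (A - E))^2)) * (A - E)"
proof -
  from assms(3,4) have "M \<noteq> B + C - A" "on_line A E M" "on_circle3 (B + C - A) B C M"
    unfolding is_M_A_def E_def Let_def by auto
  have F: "B + C - A = E + of_real (- 1) * (A - E)"
    unfolding E_def by (simp add: field_simps)
  obtain \<mu> where "M = A + of_real \<mu> * (E - A)"
    using \<open>on_line A E M\<close> unfolding on_line_def by blast
  then have M: "M = E + of_real (1 - \<mu>) * (A - E)"
    by (simp add: algebra_simps)
  have "1 - \<mu> \<noteq> - 1"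
    using \<open>M \<noteq> B + C - A\<close> unfolding M F by metis
  obtain q where q: "dist q (B + C - A) = dist q B" "dist q B = dist q C"
    "dist q M = dist q (B + C - A)"
    using \<open>on_circle3 (B + C - A) B C M\<close> unfolding on_circle3_def by blast
  have "- 1 * (1 - \<mu>) = - ((cmod (B - C))^2 / (4 * (cmod (A - E))^2))"
    using chord_product_through_midpoint[of "A - E" q B C "- 1" "1 - \<mu>"] assms(2) q
      \<open>1 - \<mu> \<noteq> - 1\<close>
    unfolding E_def[symmetric] F[symmetric] M[symmetric] by simp
  then have "1 - \<mu> = (cmod (B - C))^2 / (4 * (cmod (A - E))^2)"
    by simp
  then show ?thesis
    unfolding M by simp
qed

lemma is_M_A_eq:
  fixes A B C M :: complex
  defines "E \<equiv> (B + C) / 2"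
  assumes "A \<noteq> E" and "angle_at B A C \<noteq> pi / 2" and "is_M_A A B C M"
  shows "M = E + of_real ((cmod (B - C))^2 / (4 * (cmod (A - E))^2)) * (A - E)"
  using assms is_M_A_eq_acute is_M_A_eq_obtuse by (cases "angle_at B A C < pi / 2") auto

lemma median_inversion_eq:
  fixes A B C :: complex
  defines "E \<equiv> (B + C) / 2"
  assumes "A \<noteq> E"
  shows "E + of_real ((cmod (B - C))^2 / (4 * (cmod (A - E))^2)) * (A - E)
         = A + 2 * ((B - A) \<bullet> (C - A)) / cnj ((B - A) + (C - A))"
proof -
  define b c where bc: "b = B - A" "c = C - A"
  have "b + c \<noteq> 0"
    using assms(2) unfolding E_def bc by (auto simp: field_simps)
  then have nz: "(cmod (b + c))^2 \<noteq> 0"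
    by simp
  have AE: "A - E = - ((b + c) / 2)" and BC: "B - C = b - c" and E: "E = A + (b + c) / 2"
    unfolding E_def bc by (simp_all add: field_simps)
  have "(cmod (b - c))^2 = (cmod (b + c))^2 - 4 * (b \<bullet> c)"
    unfolding cmod_power2 inner_complex_def by (simp add: power2_eq_square algebra_simps)
  then have k: "(cmod (B - C))^2 / (4 * (cmod (A - E))^2) = 1 - 4 * (b \<bullet> c) / (cmod (b + c))^2"
    using nz unfolding AE BC by (simp add: field_simps norm_divide)
  have "E + of_real ((cmod (B - C))^2 / (4 * (cmod (A - E))^2)) * (A - E)
      = A + of_real (2 * (b \<bullet> c) / (cmod (b + c))^2) * (b + c)"
    using nz by (simp only: k) (simp add: AE E field_simps)
  also have "\<dots> = A + of_real (2 * (b \<bullet> c)) / ((b + c) * cnj (b + c)) * (b + c)"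
    by (simp only: of_real_divide complex_norm_square)
  also have "\<dots> = A + 2 * (b \<bullet> c) / cnj (b + c)"
    using \<open>b + c \<noteq> 0\<close> by simp
  finally show ?thesis
    unfolding bc .
qed

theorem theorem12:
  fixes A B C S M :: complex
  assumes "\<not> collinear {A, B, C}"
    and "angle_at B A C \<noteq> pi / 2"
    and "is_S_A A B C S"
    and "is_M_A A B C M"
  shows "isogonal_conj A B C S M"
proof -
  define b c where bc: "b = B - A" "c = C - A"
  have X: "cross b c \<noteq> 0"
    using cross_neq_0_if_not_collinear[OF assms(1)] by (simp add: bc)
  have "b \<bullet> c \<noteq> 0"
    using assms(2) by (auto simp: angle_at_def bc)
  have "A \<noteq> (B + C) / 2"
    using cross_neq_0_imp_distinct(4)[OF X] by (auto simp: bc field_simps)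
  have "S = A + b * c / (b + c)"
    using is_S_A_eq[OF assms(1,3)] by (simp add: bc)
  moreover have "M = A + 2 * (b \<bullet> c) / cnj (b + c)"
    using is_M_A_eq[OF \<open>A \<noteq> (B + C) / 2\<close> assms(2,4)]
      median_inversion_eq[OF \<open>A \<noteq> (B + C) / 2\<close>]
    by (simp add: bc)
  moreover have "B = A + b" "C = A + c"
    by (simp_all add: bc)
  ultimately show ?thesis
    using isogonal_conj_closed_form[OF X \<open>b \<bullet> c \<noteq> 0\<close>] by simp
qed

end
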